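(* Let $\alpha\in\mathbb T\setminus\{1\}$. For $r\in[0,\infty)\setminus\{1\}$ define $T_r:L^2(\mu)\to L^2(\mu_\alpha)$ by $$T_rf(z)=\int_{\mathbb T}\frac{f(\xi)\,d\mu(\xi)}{1-r\overline\xi z}.$$ Then $\sup_{r\in[0,\infty)\setminus\{1\}}\|T_r\|_{L^2(\mu)\to L^2(\mu_\alpha)}<\infty$.
   Context: $\mathbb T=\{|z|=1\}$. Let $\mu$ be a Borel probability measure on $\mathbb T$, $U=M_\xi$ multiplication by the independent variable on $L^2(\mu)$. For $\alpha\in\mathbb T$, $U_\alpha$ is the unitary operator $(U_\alpha f)(\xi)=\xi f(\xi)+(\alpha-1)\int_{\mathbb T}f(\zeta)\zeta\,d\mu(\zeta)$ on $L^2(\mu)$ (a rank one perturbation of $U$ with $*$-cyclic vector $\mathbf 1$), and $\mu_\alpha$ is its spectral measure with respect to $\mathbf 1$, i.e. the probability measure with $\int z^nd\mu_\alpha(z)=(U_\alpha^n\mathbf 1,\mathbf 1)_{L^2(\mu)}$ for all $n\in\mathbb Z$. *)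

theory Defs
  imports "HOL-Probability.Probability"
begin

definition Ualpha :: "complex measure \<Rightarrow> complex \<Rightarrow> (complex \<Rightarrow> complex) \<Rightarrow> (complex \<Rightarrow> complex)" where
  "Ualpha \<mu> \<alpha> f = (\<lambda>\<xi>. \<xi> * f \<xi> + (\<alpha> - 1) * (\<integral>\<zeta>. f \<zeta> * \<zeta> \<partial>\<mu>))"

text \<open>nu is the spectral measure mu_alpha of U_alpha with respect to the constant function 1:
  a Borel probability measure on the unit circle with
  integral z^n dnu = (U_alpha^n 1, 1)_{L^2(mu)} = integral (U_alpha^n 1) dmu.
  For negative n the moments are determined by conjugation (|z| = 1 on the support and
  U_alpha is unitary), so it suffices to prescribe n >= 0.\<close>
definition is_spectral_measure_alpha :: "complex measure \<Rightarrow> complex \<Rightarrow> complex measure \<Rightarrow> bool" where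
  "is_spectral_measure_alpha \<mu> \<alpha> \<nu> \<longleftrightarrow>
     prob_space \<nu> \<and> sets \<nu> = sets borel \<and> (AE z in \<nu>. cmod z = 1) \<and>
     (\<forall>n::nat. (\<integral>z. z ^ n \<partial>\<nu>) = (\<integral>\<xi>. ((Ualpha \<mu> \<alpha>) ^^ n) (\<lambda>_. 1) \<xi> \<partial>\<mu>))"

definition Tr :: "complex measure \<Rightarrow> real \<Rightarrow> (complex \<Rightarrow> complex) \<Rightarrow> complex \<Rightarrow> complex" where
  "Tr \<mu> r f z = (\<integral>\<xi>. f \<xi> / (1 - complex_of_real r * cnj \<xi> * z) \<partial>\<mu>)"

end

theory Submission
  imports Defs
begin

text \<open>On the unit circle \<open>U (conj \<xi>^(n+1) f) = conj \<xi>^n f + (\<alpha> - 1) f^(n)\<close>, where \<open>f^(n)\<close> is the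
  \<open>n\<close>-th Fourier coefficient. Hence \<open>X\<^sub>n = U\<^sup>n (conj \<xi>^n f)\<close>, whose norm is that of \<open>f\<close> because
  \<open>U\<close> is unitary, has increments \<open>X\<^sub>n\<^sub>+\<^sub>1 - X\<^sub>n = (\<alpha> - 1) f^(n) U\<^sup>n 1\<close>, and summation by parts
  bounds \<open>(\<alpha> - 1) \<Sum>\<^sub>n\<^sub><\<^sub>N r\<^sup>n f^(n) U\<^sup>n 1\<close> by \<open>2 \<parallel>f\<parallel>\<close> for \<open>0 \<le> r \<le> 1\<close>. The moments of
  \<open>\<mu>\<^sub>\<alpha>\<close> make \<open>z\<^sup>n \<mapsto> U\<^sup>n 1\<close> isometric from \<open>L\<^sup>2(\<mu>\<^sub>\<alpha>)\<close> into \<open>L\<^sup>2(\<mu>)\<close>, and for \<open>r < 1\<close> the series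
  \<open>\<Sum> r\<^sup>n f^(n) z\<^sup>n\<close> converges to \<open>T\<^sub>r f (z)\<close>, so \<open>\<parallel>T\<^sub>r\<parallel> \<le> 2 / \<bar>\<alpha> - 1\<bar>\<close>. For \<open>r > 1\<close> the kernel
  identity \<open>1 / (1 - r w) = - conj w / (r - conj w)\<close> on \<open>\<bar>w\<bar> = 1\<close> expresses \<open>T\<^sub>r f\<close> through
  \<open>T\<^sub>1\<^sub>/\<^sub>r\<close> applied to \<open>conj (\<xi> f)\<close>.\<close>

lemma borel_measurable_cnj [measurable]:
  "g \<in> borel_measurable M \<Longrightarrow> (\<lambda>x. cnj (g x)) \<in> borel_measurable M"
  by (rule borel_measurable_continuous_on[OF continuous_on_cnj[OF continuous_on_id]])

definition square_integrable :: "'a measure \<Rightarrow> ('a \<Rightarrow> complex) \<Rightarrow> bool" where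
  "square_integrable M g \<longleftrightarrow> g \<in> borel_measurable M \<and> integrable M (\<lambda>x. (cmod (g x))\<^sup>2)"

lemma square_integrable_integrable_mult:
  assumes "square_integrable M g" "square_integrable M h"
  shows "integrable M (\<lambda>x. g x * h x)"
proof (rule Bochner_Integration.integrable_bound)
  show "integrable M (\<lambda>x. (cmod (g x))\<^sup>2 + (cmod (h x))\<^sup>2)"
    using assms by (simp add: square_integrable_def)
  show "(\<lambda>x. g x * h x) \<in> borel_measurable M"
    using assms by (auto simp: square_integrable_def)
  show "AE x in M. norm (g x * h x) \<le> norm ((cmod (g x))\<^sup>2 + (cmod (h x))\<^sup>2)"
  proof (intro AE_I2)
    fix x
    have "norm (g x * h x) = cmod (g x) * cmod (h x)" by (rule norm_mult)
    also have "\<dots> \<le> (cmod (g x))\<^sup>2 + (cmod (h x))\<^sup>2"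
      using sum_squares_bound[of "cmod (g x)" "cmod (h x)"]
        mult_nonneg_nonneg[OF norm_ge_zero norm_ge_zero, of "g x" "h x"] by linarith
    finally show "norm (g x * h x) \<le> norm ((cmod (g x))\<^sup>2 + (cmod (h x))\<^sup>2)" by simp
  qed
qed

lemma (in finite_measure) integrable_square_integrable:
  assumes "square_integrable M g"
  shows "integrable M g"
proof -
  have [measurable]: "g \<in> borel_measurable M"
    using assms by (simp add: square_integrable_def)
  have "integrable M (\<lambda>x. cmod (g x))"
  proof (rule square_integrable_imp_integrable)
    show "integrable M (\<lambda>x. (cmod (g x))\<^sup>2)"
      using assms by (simp add: square_integrable_def)
  qed measurable
  then show ?thesis by (simp add: integrable_norm_iff)
qed

lemma square_integrable_add:
  assumes "square_integrable M g" "square_integrable M h"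
  shows "square_integrable M (\<lambda>x. g x + h x)"
proof -
  have [measurable]: "g \<in> borel_measurable M" "h \<in> borel_measurable M"
    using assms by (simp_all add: square_integrable_def)
  have "integrable M (\<lambda>x. (cmod (g x + h x))\<^sup>2)"
  proof (rule Bochner_Integration.integrable_bound)
    show "integrable M (\<lambda>x. 2 * (cmod (g x))\<^sup>2 + 2 * (cmod (h x))\<^sup>2)"
      using assms by (simp add: square_integrable_def)
    have "(cmod (g x + h x))\<^sup>2 \<le> 2 * (cmod (g x))\<^sup>2 + 2 * (cmod (h x))\<^sup>2" for x
    proof -
      have "(cmod (g x + h x))\<^sup>2 \<le> (cmod (g x) + cmod (h x))\<^sup>2"
        by (intro power_mono norm_triangle_ineq) simp
      also have "\<dots> \<le> 2 * (cmod (g x))\<^sup>2 + 2 * (cmod (h x))\<^sup>2"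
        using sum_squares_bound[of "cmod (g x)" "cmod (h x)"] by (simp add: power2_sum)
      finally show ?thesis .
    qed
    then show "AE x in M. norm ((cmod (g x + h x))\<^sup>2) \<le> norm (2 * (cmod (g x))\<^sup>2 + 2 * (cmod (h x))\<^sup>2)"
      by simp
  qed simp
  then show ?thesis by (simp add: square_integrable_def)
qed

lemma square_integrable_cmult:
  "square_integrable M g \<Longrightarrow> square_integrable M (\<lambda>x. c * g x)"
  by (auto simp: square_integrable_def norm_mult power_mult_distrib)

lemma square_integrable_cnj:
  "square_integrable M g \<Longrightarrow> square_integrable M (\<lambda>x. cnj (g x))"
  by (auto simp: square_integrable_def)

lemma (in finite_measure) square_integrable_const: "square_integrable M (\<lambda>x. c)"
  by (simp add: square_integrable_def)

lemma square_integrable_sum: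
  "(\<And>i. i \<in> A \<Longrightarrow> square_integrable M (g i)) \<Longrightarrow> square_integrable M (\<lambda>x. \<Sum>i\<in>A. g i x)"
proof (induction A rule: infinite_finite_induct)
  case (insert a A)
  then show ?case using square_integrable_add[of M "g a" "\<lambda>x. \<Sum>i\<in>A. g i x"] by simp
qed (simp_all add: square_integrable_def)

lemma square_integrable_unimodular_mult:
  assumes "square_integrable M g" "u \<in> borel_measurable M" "AE x in M. cmod (u x) = 1"
  shows "square_integrable M (\<lambda>x. u x * g x)"
    and "(\<integral>x. (cmod (u x * g x))\<^sup>2 \<partial>M) = (\<integral>x. (cmod (g x))\<^sup>2 \<partial>M)"
proof -
  have [measurable]: "g \<in> borel_measurable M" "u \<in> borel_measurable M"
    using assms by (simp_all add: square_integrable_def)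
  have ae: "AE x in M. (cmod (u x * g x))\<^sup>2 = (cmod (g x))\<^sup>2"
    using assms(3) by eventually_elim (simp add: norm_mult)
  show "square_integrable M (\<lambda>x. u x * g x)"
    using integrable_cong_AE[OF _ _ ae] assms(1) by (simp add: square_integrable_def)
  show "(\<integral>x. (cmod (u x * g x))\<^sup>2 \<partial>M) = (\<integral>x. (cmod (g x))\<^sup>2 \<partial>M)"
    by (rule integral_cong_AE[OF _ _ ae]) simp_all
qed

lemma of_real_integral_norm_square:
  "complex_of_real (\<integral>x. (cmod (g x))\<^sup>2 \<partial>M) = (\<integral>x. g x * cnj (g x) \<partial>M)"
proof -
  have "complex_of_real ((cmod (g x))\<^sup>2) = g x * cnj (g x)" for x
    by (rule complex_norm_square)
  then show ?thesis by (simp only: integral_complex_of_real[symmetric])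
qed

lemma of_real_integral_norm_square_sum:
  fixes \<phi> :: "'i \<Rightarrow> 'a \<Rightarrow> complex"
  assumes "finite A" "\<And>n m. n \<in> A \<Longrightarrow> m \<in> A \<Longrightarrow> integrable M (\<lambda>x. \<phi> n x * cnj (\<phi> m x))"
  shows "complex_of_real (\<integral>x. (cmod (\<Sum>n\<in>A. b n * \<phi> n x))\<^sup>2 \<partial>M) =
     (\<Sum>n\<in>A. \<Sum>m\<in>A. b n * cnj (b m) * (\<integral>x. \<phi> n x * cnj (\<phi> m x) \<partial>M))"
proof -
  have "(\<Sum>n\<in>A. b n * \<phi> n x) * cnj (\<Sum>n\<in>A. b n * \<phi> n x) =
      (\<Sum>n\<in>A. \<Sum>m\<in>A. b n * cnj (b m) * (\<phi> n x * cnj (\<phi> m x)))" for x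
    by (simp only: cnj_sum sum_product complex_cnj_mult ac_simps)
  then show ?thesis
    using assms by (simp add: of_real_integral_norm_square Bochner_Integration.integral_sum)
qed

definition abel_weight :: "(nat \<Rightarrow> real) \<Rightarrow> nat \<Rightarrow> nat \<Rightarrow> real" where
  "abel_weight c N n = (if 0 < n then c (n - 1) else 0) - (if n < N then c n else 0)"

lemma sum_diff_eq_sum_abel_weight:
  fixes y :: "nat \<Rightarrow> 'a::real_vector"
  shows "(\<Sum>n<N. c n *\<^sub>R (y (Suc n) - y n)) = (\<Sum>n\<le>N. abel_weight c N n *\<^sub>R y n)"
proof -
  have shifted: "(\<Sum>n<N. c n *\<^sub>R y (Suc n)) = (\<Sum>n\<le>N. (if 0 < n then c (n - 1) else 0) *\<^sub>R y n)"
    by (induction N) auto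
  have "(\<Sum>n\<le>N. (if n < N then c n else 0) *\<^sub>R y n) = (\<Sum>n<N. c n *\<^sub>R y n)"
    by (simp add: lessThan_Suc_atMost[symmetric] if_distrib[of "\<lambda>a. a *\<^sub>R _"] sum.If_cases
        Int_absorb2 subset_eq)
  then show ?thesis
    by (simp add: abel_weight_def scaleR_diff_left scaleR_diff_right sum_subtractf shifted)
qed

lemma sum_abs_abel_weight_le:
  assumes "decseq c" "\<And>n. 0 \<le> c n"
  shows "(\<Sum>n\<le>N. \<bar>abel_weight c N n\<bar>) \<le> 2 * c 0"
proof (cases N)
  case 0
  then show ?thesis using assms(2) by (simp add: abel_weight_def)
next
  case (Suc M)
  have "abel_weight c N (Suc n) = c n - c (Suc n)" if "n < M" for n
    using that Suc by (simp add: abel_weight_def)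
  moreover have "c (Suc n) \<le> c n" for n
    using assms(1) by (simp add: decseq_Suc_iff)
  ultimately have "(\<Sum>n<M. \<bar>abel_weight c N (Suc n)\<bar>) = (\<Sum>n<M. c n - c (Suc n))"
    by (intro sum.cong) auto
  also have "\<dots> = c 0 - c M" by (rule sum_lessThan_telescope')
  finally have "(\<Sum>n\<le>N. \<bar>abel_weight c N n\<bar>) = c 0 + (c 0 - c M) + c M"
    using Suc assms(2) by (simp add: sum.atMost_shift abel_weight_def)
  then show ?thesis by simp
qed

lemma norm_sum_scaleR_square_le:
  fixes y :: "'i \<Rightarrow> 'a::real_normed_vector"
  assumes "finite A"
  shows "(norm (\<Sum>n\<in>A. w n *\<^sub>R y n))\<^sup>2 \<le> (\<Sum>n\<in>A. \<bar>w n\<bar>) * (\<Sum>n\<in>A. \<bar>w n\<bar> * (norm (y n))\<^sup>2)"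
proof -
  have "norm (\<Sum>n\<in>A. w n *\<^sub>R y n) \<le> (\<Sum>n\<in>A. sqrt \<bar>w n\<bar> * (sqrt \<bar>w n\<bar> * norm (y n)))"
    using norm_sum[of "\<lambda>n. w n *\<^sub>R y n" A]
    by (simp add: real_sqrt_mult_self mult.assoc[symmetric])
  then have "(norm (\<Sum>n\<in>A. w n *\<^sub>R y n))\<^sup>2 \<le> (\<Sum>n\<in>A. sqrt \<bar>w n\<bar> * (sqrt \<bar>w n\<bar> * norm (y n)))\<^sup>2"
    by (intro power_mono) auto
  also have "\<dots> \<le> (\<Sum>n\<in>A. (sqrt \<bar>w n\<bar>)\<^sup>2) * (\<Sum>n\<in>A. (sqrt \<bar>w n\<bar> * norm (y n))\<^sup>2)"
    by (rule Cauchy_Schwarz_ineq_sum)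
  also have "\<dots> = (\<Sum>n\<in>A. \<bar>w n\<bar>) * (\<Sum>n\<in>A. \<bar>w n\<bar> * (norm (y n))\<^sup>2)"
    by (simp add: power_mult_distrib)
  finally show ?thesis .
qed

lemma inverse_one_minus_unimodular:
  assumes "cmod u = 1" "1 < r"
  shows "1 / (1 - complex_of_real r * u) = - cnj u / (complex_of_real r - cnj u)"
proof -
  have "u * cnj u = 1"
    using assms(1) by (simp flip: complex_norm_square)
  then have "- cnj u * (1 - complex_of_real r * u) = complex_of_real r - cnj u"
    by (simp add: algebra_simps)
  moreover have "1 - complex_of_real r * u \<noteq> 0"
  proof
    assume "1 - complex_of_real r * u = 0"
    then have "cmod (complex_of_real r * u) = 1"
      by (metis norm_one right_minus_eq)
    with assms show False by (simp add: norm_mult)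
  qed
  moreover have "complex_of_real r - cnj u \<noteq> 0"
  proof
    assume "complex_of_real r - cnj u = 0"
    then have "cmod (complex_of_real r) = cmod (cnj u)" by simp
    with assms show False by simp
  qed
  ultimately show ?thesis by (simp add: field_simps)
qed

locale circle_measure = prob_space \<mu> for \<mu> :: "complex measure" +
  assumes sets_\<mu>: "sets \<mu> = sets borel"
    and AE_unit_circle: "AE \<xi> in \<mu>. cmod \<xi> = 1"
begin

lemma borel_measurable_\<mu>_eq:
  "borel_measurable \<mu> = (borel_measurable borel :: (complex \<Rightarrow> 'b::topological_space) set)"
  by (rule measurable_cong_sets[OF sets_\<mu> refl])

lemma borel_measurable_id_\<mu> [measurable]: "(\<lambda>\<xi>. \<xi>) \<in> borel_measurable \<mu>"
  by (simp add: borel_measurable_\<mu>_eq)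

lemma AE_mult_cnj_self: "AE \<xi> in \<mu>. \<xi> * cnj \<xi> = 1"
  using AE_unit_circle by eventually_elim (simp flip: complex_norm_square)

lemma AE_cnj_power_unimodular: "AE \<xi> in \<mu>. cmod (cnj \<xi> ^ n) = 1"
  using AE_unit_circle by eventually_elim (simp add: norm_power)

lemma square_integrable_mult_id: "square_integrable \<mu> g \<Longrightarrow> square_integrable \<mu> (\<lambda>\<xi>. \<xi> * g \<xi>)"
  by (rule square_integrable_unimodular_mult(1)[OF _ borel_measurable_id_\<mu> AE_unit_circle])

lemma square_integrable_id: "square_integrable \<mu> (\<lambda>\<xi>. \<xi>)"
  using square_integrable_mult_id[OF square_integrable_const[of 1]] by simp

lemma square_integrable_cnj_power_mult:
  "square_integrable \<mu> g \<Longrightarrow> square_integrable \<mu> (\<lambda>\<xi>. cnj \<xi> ^ n * g \<xi>)"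
  by (rule square_integrable_unimodular_mult(1)[OF _ _ AE_cnj_power_unimodular]) measurable

lemma integral_norm_square_cnj_power_mult:
  "square_integrable \<mu> g \<Longrightarrow> (\<integral>\<xi>. (cmod (cnj \<xi> ^ n * g \<xi>))\<^sup>2 \<partial>\<mu>) = (\<integral>\<xi>. (cmod (g \<xi>))\<^sup>2 \<partial>\<mu>)"
  by (rule square_integrable_unimodular_mult(2)[OF _ _ AE_cnj_power_unimodular]) measurable

definition fourier_coeff :: "(complex \<Rightarrow> complex) \<Rightarrow> nat \<Rightarrow> complex" where
  "fourier_coeff f n = (\<integral>\<xi>. f \<xi> * cnj \<xi> ^ n \<partial>\<mu>)"

lemma norm_fourier_coeff_le:
  assumes "f \<in> borel_measurable \<mu>"
  shows "cmod (fourier_coeff f n) \<le> (\<integral>\<xi>. cmod (f \<xi>) \<partial>\<mu>)"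
proof -
  note [measurable] = assms
  have "cmod (fourier_coeff f n) \<le> (\<integral>\<xi>. cmod (f \<xi> * cnj \<xi> ^ n) \<partial>\<mu>)"
    unfolding fourier_coeff_def by (rule integral_norm_bound)
  also have "\<dots> = (\<integral>\<xi>. cmod (f \<xi>) \<partial>\<mu>)"
    using AE_cnj_power_unimodular[of n]
    by (intro integral_cong_AE) (auto elim!: eventually_mono simp: norm_mult)
  finally show ?thesis .
qed

lemma Tr_sums:
  assumes f: "square_integrable \<mu> f" and r: "0 \<le> r" "r < 1" and z: "cmod z = 1"
  shows "(\<lambda>n. complex_of_real (r ^ n) * fourier_coeff f n * z ^ n) sums Tr \<mu> r f z"
proof -
  have [measurable]: "f \<in> borel_measurable \<mu>"
    using f by (simp add: square_integrable_def)
  define q where "q \<xi> = complex_of_real r * cnj \<xi> * z" for \<xi>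
  define s where "s N \<xi> = f \<xi> * (\<Sum>n<N. q \<xi> ^ n)" for N \<xi>
  have integral_s: "(\<integral>\<xi>. s N \<xi> \<partial>\<mu>) = (\<Sum>n<N. complex_of_real (r ^ n) * fourier_coeff f n * z ^ n)" for N
  proof -
    have integrable_coeff: "integrable \<mu> (\<lambda>\<xi>. f \<xi> * cnj \<xi> ^ n)" for n
      using integrable_square_integrable[OF square_integrable_cnj_power_mult[OF f]]
      by (simp add: mult.commute)
    have "(\<integral>\<xi>. s N \<xi> \<partial>\<mu>) =
        (\<integral>\<xi>. (\<Sum>n<N. complex_of_real (r ^ n) * z ^ n * (f \<xi> * cnj \<xi> ^ n)) \<partial>\<mu>)"
      by (simp add: s_def q_def sum_distrib_left power_mult_distrib ac_simps)
    also have "\<dots> = (\<Sum>n<N. complex_of_real (r ^ n) * z ^ n * fourier_coeff f n)"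
      using integrable_coeff by (simp add: fourier_coeff_def)
    finally show ?thesis by (simp add: ac_simps)
  qed
  have "(\<lambda>N. \<integral>\<xi>. s N \<xi> \<partial>\<mu>) \<longlonglongrightarrow> (\<integral>\<xi>. f \<xi> / (1 - q \<xi>) \<partial>\<mu>)"
  proof (rule integral_dominated_convergence[where w="\<lambda>\<xi>. cmod (f \<xi>) / (1 - r)"])
    show "(\<lambda>\<xi>. f \<xi> / (1 - q \<xi>)) \<in> borel_measurable \<mu>" "s N \<in> borel_measurable \<mu>" for N
      unfolding s_def q_def by measurable
    show "integrable \<mu> (\<lambda>\<xi>. cmod (f \<xi>) / (1 - r))"
      using integrable_square_integrable[OF f] by simp
    have norm_q: "AE \<xi> in \<mu>. cmod (q \<xi>) = r"
      using AE_unit_circle by eventually_elim (use z r in \<open>simp add: q_def norm_mult\<close>)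
    then show "AE \<xi> in \<mu>. (\<lambda>N. s N \<xi>) \<longlonglongrightarrow> f \<xi> / (1 - q \<xi>)"
    proof eventually_elim
      case (elim \<xi>)
      then have "(\<lambda>n. q \<xi> ^ n) sums (1 / (1 - q \<xi>))"
        using r by (intro geometric_sums) simp
      then have "(\<lambda>N. \<Sum>n<N. q \<xi> ^ n) \<longlonglongrightarrow> 1 / (1 - q \<xi>)"
        by (simp add: sums_def)
      then have "(\<lambda>N. f \<xi> * (\<Sum>n<N. q \<xi> ^ n)) \<longlonglongrightarrow> f \<xi> * (1 / (1 - q \<xi>))"
        by (intro tendsto_mult tendsto_const)
      then show ?case by (simp add: s_def)
    qed
    show "AE \<xi> in \<mu>. norm (s N \<xi>) \<le> cmod (f \<xi>) / (1 - r)" for N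
      using norm_q
    proof eventually_elim
      case (elim \<xi>)
      have "cmod (\<Sum>n<N. q \<xi> ^ n) \<le> (\<Sum>n<N. r ^ n)"
        using norm_sum[of "\<lambda>n. q \<xi> ^ n" "{..<N}"] elim by (simp add: norm_power)
      also have "\<dots> \<le> 1 / (1 - r)"
        using r by (simp add: sum_gp_strict divide_right_mono)
      finally show ?case
        by (simp add: s_def norm_mult divide_inverse mult_left_mono)
    qed
  qed
  then show ?thesis
    unfolding integral_s by (simp add: sums_def Tr_def q_def)
qed

lemma Tr_reflect:
  assumes f: "f \<in> borel_measurable \<mu>" and r: "1 < r" and z: "cmod z = 1"
  shows "Tr \<mu> r f z = - cnj z / complex_of_real r * cnj (Tr \<mu> (1 / r) (\<lambda>\<xi>. cnj (f \<xi> * \<xi>)) z)"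
proof -
  note [measurable] = f
  have "Tr \<mu> r f z = (\<integral>\<xi>. - cnj z / complex_of_real r * (f \<xi> * \<xi> / (1 - complex_of_real (1 / r) * \<xi> * cnj z)) \<partial>\<mu>)"
    unfolding Tr_def
  proof (rule integral_cong_AE)
    show "AE \<xi> in \<mu>. f \<xi> / (1 - complex_of_real r * cnj \<xi> * z) =
        - cnj z / complex_of_real r * (f \<xi> * \<xi> / (1 - complex_of_real (1 / r) * \<xi> * cnj z))"
      using AE_unit_circle
    proof eventually_elim
      case (elim \<xi>)
      define D where "D = 1 - complex_of_real (1 / r) * \<xi> * cnj z"
      have "complex_of_real r - \<xi> * cnj z = complex_of_real r * D"
        using r by (simp add: D_def algebra_simps of_real_divide)
      moreover have "1 / (1 - complex_of_real r * (cnj \<xi> * z)) = - cnj (cnj \<xi> * z) / (complex_of_real r - cnj (cnj \<xi> * z))"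
        using elim z r by (intro inverse_one_minus_unimodular) (simp_all add: norm_mult)
      ultimately have "1 / (1 - complex_of_real r * cnj \<xi> * z) = - cnj z / complex_of_real r * (\<xi> / D)"
        by (simp add: mult.assoc mult.commute[of \<xi>])
      then show ?case
        unfolding D_def by (metis times_divide_eq_right divide_inverse mult.left_commute mult_1_right)
    qed
  qed measurable
  also have "\<dots> = - cnj z / complex_of_real r * (\<integral>\<xi>. f \<xi> * \<xi> / (1 - complex_of_real (1 / r) * \<xi> * cnj z) \<partial>\<mu>)"
    by (rule integral_mult_right_zero)
  also have "(\<integral>\<xi>. f \<xi> * \<xi> / (1 - complex_of_real (1 / r) * \<xi> * cnj z) \<partial>\<mu>) =
      cnj (Tr \<mu> (1 / r) (\<lambda>\<xi>. cnj (f \<xi> * \<xi>)) z)"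
    unfolding Tr_def by (subst Bochner_Integration.integral_cnj[symmetric]) (simp add: mult.commute)
  finally show ?thesis .
qed

end

locale rank_one_perturbation = circle_measure +
  fixes \<alpha> :: complex
  assumes norm_\<alpha>: "cmod \<alpha> = 1"
begin

abbreviation U where "U \<equiv> Ualpha \<mu> \<alpha>"

lemma square_integrable_U: "square_integrable \<mu> g \<Longrightarrow> square_integrable \<mu> (U g)"
  unfolding Ualpha_def by (intro square_integrable_add square_integrable_mult_id square_integrable_const)

lemma U_add_cmult:
  assumes "square_integrable \<mu> g" "square_integrable \<mu> h"
  shows "U (\<lambda>\<xi>. g \<xi> + k * h \<xi>) = (\<lambda>\<xi>. U g \<xi> + k * U h \<xi>)"
proof -
  have "integrable \<mu> (\<lambda>\<zeta>. g \<zeta> * \<zeta>)" "integrable \<mu> (\<lambda>\<zeta>. h \<zeta> * \<zeta>)"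
    using assms by (simp_all add: square_integrable_integrable_mult square_integrable_id)
  then have "(\<integral>\<zeta>. g \<zeta> * \<zeta> + k * (h \<zeta> * \<zeta>) \<partial>\<mu>) = (\<integral>\<zeta>. g \<zeta> * \<zeta> \<partial>\<mu>) + k * (\<integral>\<zeta>. h \<zeta> * \<zeta> \<partial>\<mu>)"
    by simp
  moreover have "(\<lambda>\<zeta>. (g \<zeta> + k * h \<zeta>) * \<zeta>) = (\<lambda>\<zeta>. g \<zeta> * \<zeta> + k * (h \<zeta> * \<zeta>))"
    by (simp add: algebra_simps)
  ultimately have "(\<integral>\<zeta>. (g \<zeta> + k * h \<zeta>) * \<zeta> \<partial>\<mu>) = (\<integral>\<zeta>. g \<zeta> * \<zeta> \<partial>\<mu>) + k * (\<integral>\<zeta>. h \<zeta> * \<zeta> \<partial>\<mu>)"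
    by simp
  then show ?thesis by (simp add: Ualpha_def fun_eq_iff algebra_simps)
qed

lemma U_cong_AE:
  assumes "g \<in> borel_measurable \<mu>" "h \<in> borel_measurable \<mu>" "AE \<xi> in \<mu>. g \<xi> = h \<xi>"
  shows "AE \<xi> in \<mu>. U g \<xi> = U h \<xi>"
proof -
  have "(\<integral>\<zeta>. g \<zeta> * \<zeta> \<partial>\<mu>) = (\<integral>\<zeta>. h \<zeta> * \<zeta> \<partial>\<mu>)"
    using assms by (intro integral_cong_AE) (auto elim!: eventually_mono)
  then show ?thesis using assms(3) by (auto simp: Ualpha_def elim!: eventually_mono)
qed

lemma integral_U_mult_cnj_U:
  assumes g: "square_integrable \<mu> g" and h: "square_integrable \<mu> h"
  shows "(\<integral>\<xi>. U g \<xi> * cnj (U h \<xi>) \<partial>\<mu>) = (\<integral>\<xi>. g \<xi> * cnj (h \<xi>) \<partial>\<mu>)"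
proof -
  define cg where "cg = (\<integral>\<zeta>. g \<zeta> * \<zeta> \<partial>\<mu>)"
  define ch where "ch = (\<integral>\<zeta>. h \<zeta> * \<zeta> \<partial>\<mu>)"
  define a where "a = (\<alpha> - 1) * cg"
  define b where "b = (\<alpha> - 1) * ch"
  have [measurable]: "g \<in> borel_measurable \<mu>" "h \<in> borel_measurable \<mu>"
    using g h by (simp_all add: square_integrable_def)
  have "AE \<xi> in \<mu>. U g \<xi> * cnj (U h \<xi>) =
      g \<xi> * cnj (h \<xi>) + cnj b * (g \<xi> * \<xi>) + a * cnj (h \<xi> * \<xi>) + a * cnj b"
    using AE_mult_cnj_self
  proof eventually_elim
    case (elim \<xi>)
    then have "\<xi> * g \<xi> * cnj (\<xi> * h \<xi>) = g \<xi> * cnj (h \<xi>)"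
      by (simp add: algebra_simps)
    then show ?case
      unfolding Ualpha_def cg_def[symmetric] ch_def[symmetric] a_def[symmetric] b_def[symmetric]
      by (simp add: algebra_simps)
  qed
  moreover have "integrable \<mu> (\<lambda>\<xi>. U g \<xi> * cnj (U h \<xi>))" "integrable \<mu> (\<lambda>\<xi>. g \<xi> * cnj (h \<xi>))"
    "integrable \<mu> (\<lambda>\<xi>. g \<xi> * \<xi>)" "integrable \<mu> (\<lambda>\<xi>. h \<xi> * \<xi>)"
    using g h by (simp_all add: square_integrable_integrable_mult square_integrable_cnj
        square_integrable_U square_integrable_id)
  ultimately have "(\<integral>\<xi>. U g \<xi> * cnj (U h \<xi>) \<partial>\<mu>) =
      (\<integral>\<xi>. g \<xi> * cnj (h \<xi>) \<partial>\<mu>) + (cnj b * cg + a * cnj ch + a * cnj b)"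
    by (subst integral_cong_AE[OF _ _ \<open>AE \<xi> in \<mu>. _ = _\<close>])
      (simp_all add: cg_def ch_def prob_space add.assoc del: complex_cnj_mult)
  also have "cnj b * cg + a * cnj ch + a * cnj b = cg * cnj ch * (\<alpha> * cnj \<alpha> - 1)"
    by (simp add: a_def b_def algebra_simps)
  also have "\<alpha> * cnj \<alpha> = 1"
    using norm_\<alpha> by (simp flip: complex_norm_square)
  finally show ?thesis by simp
qed

lemma square_integrable_U_pow: "square_integrable \<mu> g \<Longrightarrow> square_integrable \<mu> ((U ^^ n) g)"
  by (induction n) (simp_all add: square_integrable_U)

lemma U_pow_add_cmult:
  assumes "square_integrable \<mu> g" "square_integrable \<mu> h"
  shows "(U ^^ n) (\<lambda>\<xi>. g \<xi> + k * h \<xi>) = (\<lambda>\<xi>. (U ^^ n) g \<xi> + k * (U ^^ n) h \<xi>)"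
  by (induction n) (simp_all add: U_add_cmult square_integrable_U_pow assms)

lemma U_pow_cong_AE:
  assumes "square_integrable \<mu> g" "square_integrable \<mu> h" "AE \<xi> in \<mu>. g \<xi> = h \<xi>"
  shows "AE \<xi> in \<mu>. (U ^^ n) g \<xi> = (U ^^ n) h \<xi>"
proof (induction n)
  case (Suc n)
  then show ?case
    using square_integrable_U_pow[OF assms(1), of n] square_integrable_U_pow[OF assms(2), of n]
    by (simp add: U_cong_AE square_integrable_def)
qed (use assms in simp)

lemma integral_U_pow_mult_cnj_U_pow:
  assumes "square_integrable \<mu> g" "square_integrable \<mu> h"
  shows "(\<integral>\<xi>. (U ^^ n) g \<xi> * cnj ((U ^^ n) h \<xi>) \<partial>\<mu>) = (\<integral>\<xi>. g \<xi> * cnj (h \<xi>) \<partial>\<mu>)"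
  by (induction n) (simp_all add: integral_U_mult_cnj_U square_integrable_U_pow assms)

definition orbit :: "nat \<Rightarrow> complex \<Rightarrow> complex" where
  "orbit n = (U ^^ n) (\<lambda>_. 1)"

definition twisted_orbit :: "(complex \<Rightarrow> complex) \<Rightarrow> nat \<Rightarrow> complex \<Rightarrow> complex" where
  "twisted_orbit f n = (U ^^ n) (\<lambda>\<xi>. cnj \<xi> ^ n * f \<xi>)"

lemma square_integrable_orbit: "square_integrable \<mu> (orbit n)"
  unfolding orbit_def by (intro square_integrable_U_pow square_integrable_const)

lemma square_integrable_twisted_orbit:
  "square_integrable \<mu> f \<Longrightarrow> square_integrable \<mu> (twisted_orbit f n)"
  unfolding twisted_orbit_def by (intro square_integrable_U_pow square_integrable_cnj_power_mult)

lemma integral_norm_square_twisted_orbit: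
  assumes f: "square_integrable \<mu> f"
  shows "(\<integral>\<xi>. (cmod (twisted_orbit f n \<xi>))\<^sup>2 \<partial>\<mu>) = (\<integral>\<xi>. (cmod (f \<xi>))\<^sup>2 \<partial>\<mu>)"
proof -
  have "complex_of_real (\<integral>\<xi>. (cmod (twisted_orbit f n \<xi>))\<^sup>2 \<partial>\<mu>) =
      complex_of_real (\<integral>\<xi>. (cmod (cnj \<xi> ^ n * f \<xi>))\<^sup>2 \<partial>\<mu>)"
    unfolding of_real_integral_norm_square twisted_orbit_def
    by (intro integral_U_pow_mult_cnj_U_pow square_integrable_cnj_power_mult f)
  then show ?thesis
    using integral_norm_square_cnj_power_mult[OF f] by simp
qed

lemma twisted_orbit_Suc_AE:
  assumes f: "square_integrable \<mu> f"
  shows "AE \<xi> in \<mu>. twisted_orbit f (Suc n) \<xi> =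
    twisted_orbit f n \<xi> + (\<alpha> - 1) * fourier_coeff f n * orbit n \<xi>"
proof -
  have [measurable]: "f \<in> borel_measurable \<mu>"
    using f by (simp add: square_integrable_def)
  define k where "k = (\<alpha> - 1) * fourier_coeff f n"
  have coeff: "(\<integral>\<zeta>. cnj \<zeta> ^ Suc n * f \<zeta> * \<zeta> \<partial>\<mu>) = fourier_coeff f n"
    unfolding fourier_coeff_def
    by (rule integral_cong_AE) (use AE_mult_cnj_self in \<open>auto elim!: eventually_mono simp: algebra_simps\<close>)
  have "AE \<xi> in \<mu>. U (\<lambda>\<xi>. cnj \<xi> ^ Suc n * f \<xi>) \<xi> = cnj \<xi> ^ n * f \<xi> + k"
    using AE_mult_cnj_self
    by eventually_elim (unfold Ualpha_def coeff, simp add: k_def algebra_simps)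
  then have "AE \<xi> in \<mu>. (U ^^ n) (U (\<lambda>\<xi>. cnj \<xi> ^ Suc n * f \<xi>)) \<xi> =
      (U ^^ n) (\<lambda>\<xi>. cnj \<xi> ^ n * f \<xi> + k) \<xi>"
    using f by (intro U_pow_cong_AE square_integrable_U square_integrable_add
        square_integrable_cnj_power_mult square_integrable_const)
  moreover have "(U ^^ n) (\<lambda>\<xi>. cnj \<xi> ^ n * f \<xi> + k) = (\<lambda>\<xi>. twisted_orbit f n \<xi> + k * orbit n \<xi>)"
    using U_pow_add_cmult[OF square_integrable_cnj_power_mult[OF f, of n] square_integrable_const[of 1],
        where n = n and k = k]
    by (simp add: twisted_orbit_def orbit_def)
  ultimately show ?thesis
    by (simp add: twisted_orbit_def k_def funpow_Suc_right del: funpow.simps)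
qed

lemma integral_norm_square_sum_orbit_le:
  assumes f: "square_integrable \<mu> f" and c: "decseq c" "\<And>n. 0 \<le> c n"
  shows "(cmod (\<alpha> - 1))\<^sup>2 * (\<integral>\<xi>. (cmod (\<Sum>n<N. complex_of_real (c n) * fourier_coeff f n * orbit n \<xi>))\<^sup>2 \<partial>\<mu>)
    \<le> 4 * (c 0)\<^sup>2 * (\<integral>\<xi>. (cmod (f \<xi>))\<^sup>2 \<partial>\<mu>)"
proof -
  define G where "G \<xi> = (\<Sum>n<N. complex_of_real (c n) * fourier_coeff f n * orbit n \<xi>)" for \<xi>
  define X where "X = twisted_orbit f"
  define w where "w = abel_weight c N"
  have X: "square_integrable \<mu> (X n)" for n
    using f by (simp add: X_def square_integrable_twisted_orbit)
  have "AE \<xi> in \<mu>. \<forall>n. X (Suc n) \<xi> = X n \<xi> + (\<alpha> - 1) * fourier_coeff f n * orbit n \<xi>"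
    using twisted_orbit_Suc_AE[OF f] by (simp add: X_def AE_all_countable)
  then have pointwise: "AE \<xi> in \<mu>. (cmod ((\<alpha> - 1) * G \<xi>))\<^sup>2 \<le> 2 * c 0 * (\<Sum>n\<le>N. \<bar>w n\<bar> * (cmod (X n \<xi>))\<^sup>2)"
  proof eventually_elim
    case (elim \<xi>)
    have "(\<alpha> - 1) * G \<xi> = (\<Sum>n<N. c n *\<^sub>R (X (Suc n) \<xi> - X n \<xi>))"
      unfolding G_def sum_distrib_left by (intro sum.cong) (simp_all add: elim scaleR_conv_of_real ac_simps)
    also have "\<dots> = (\<Sum>n\<le>N. w n *\<^sub>R X n \<xi>)"
      unfolding w_def by (rule sum_diff_eq_sum_abel_weight)
    finally have "(cmod ((\<alpha> - 1) * G \<xi>))\<^sup>2 \<le> (\<Sum>n\<le>N. \<bar>w n\<bar>) * (\<Sum>n\<le>N. \<bar>w n\<bar> * (cmod (X n \<xi>))\<^sup>2)"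
      using norm_sum_scaleR_square_le[of "{..N}" w "\<lambda>n. X n \<xi>"] by simp
    also have "\<dots> \<le> 2 * c 0 * (\<Sum>n\<le>N. \<bar>w n\<bar> * (cmod (X n \<xi>))\<^sup>2)"
      using sum_abs_abel_weight_le[OF c] by (intro mult_right_mono) (simp_all add: w_def sum_nonneg)
    finally show ?case .
  qed
  have "(cmod (\<alpha> - 1))\<^sup>2 * (\<integral>\<xi>. (cmod (G \<xi>))\<^sup>2 \<partial>\<mu>) = (\<integral>\<xi>. (cmod ((\<alpha> - 1) * G \<xi>))\<^sup>2 \<partial>\<mu>)"
    by (simp add: norm_mult power_mult_distrib)
  also have "\<dots> \<le> (\<integral>\<xi>. 2 * c 0 * (\<Sum>n\<le>N. \<bar>w n\<bar> * (cmod (X n \<xi>))\<^sup>2) \<partial>\<mu>)"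
  proof (rule integral_mono_AE[OF _ _ pointwise])
    have "square_integrable \<mu> G"
      unfolding G_def by (intro square_integrable_sum square_integrable_cmult square_integrable_orbit)
    then show "integrable \<mu> (\<lambda>\<xi>. (cmod ((\<alpha> - 1) * G \<xi>))\<^sup>2)"
      by (simp add: square_integrable_def norm_mult power_mult_distrib)
    show "integrable \<mu> (\<lambda>\<xi>. 2 * c 0 * (\<Sum>n\<le>N. \<bar>w n\<bar> * (cmod (X n \<xi>))\<^sup>2))"
      using X by (simp add: square_integrable_def)
  qed
  also have "\<dots> = 2 * c 0 * (\<Sum>n\<le>N. \<bar>w n\<bar>) * (\<integral>\<xi>. (cmod (f \<xi>))\<^sup>2 \<partial>\<mu>)"
    using X by (simp add: square_integrable_def X_def integral_norm_square_twisted_orbit[OF f]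
        sum_distrib_right)
  also have "\<dots> \<le> 2 * c 0 * (2 * c 0) * (\<integral>\<xi>. (cmod (f \<xi>))\<^sup>2 \<partial>\<mu>)"
    using sum_abs_abel_weight_le[OF c, of N] c(2)[of 0]
    by (intro mult_right_mono mult_left_mono) (simp_all add: w_def)
  finally show ?thesis by (simp add: G_def power2_eq_square ac_simps)
qed

end

locale clark_measure = rank_one_perturbation +
  fixes \<nu> :: "complex measure"
  assumes spectral: "is_spectral_measure_alpha \<mu> \<alpha> \<nu>"
begin

sublocale \<nu>: prob_space \<nu>
  using spectral by (simp add: is_spectral_measure_alpha_def)

lemma sets_\<nu>: "sets \<nu> = sets borel"
  and AE_unit_circle_\<nu>: "AE z in \<nu>. cmod z = 1"
  and integral_power_\<nu>: "(\<integral>z. z ^ n \<partial>\<nu>) = (\<integral>\<xi>. orbit n \<xi> \<partial>\<mu>)"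
  using spectral by (simp_all add: is_spectral_measure_alpha_def orbit_def)

lemma borel_measurable_id_\<nu> [measurable]: "(\<lambda>z. z) \<in> borel_measurable \<nu>"
  by (simp add: measurable_cong_sets[OF sets_\<nu> refl])

lemma integral_power_mult_cnj_power_le:
  assumes "m \<le> n"
  shows "(\<integral>z. z ^ n * cnj (z ^ m) \<partial>\<nu>) = (\<integral>\<xi>. orbit n \<xi> * cnj (orbit m \<xi>) \<partial>\<mu>)"
proof -
  define k where "k = n - m"
  have n: "n = m + k" using assms by (simp add: k_def)
  have "(\<integral>z. z ^ n * cnj (z ^ m) \<partial>\<nu>) = (\<integral>z. z ^ k \<partial>\<nu>)"
  proof (rule integral_cong_AE)
    show "AE z in \<nu>. z ^ n * cnj (z ^ m) = z ^ k"
      using AE_unit_circle_\<nu>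
    proof eventually_elim
      case (elim z)
      then have "z ^ m * cnj z ^ m = 1"
        by (simp flip: power_mult_distrib complex_norm_square)
      then show ?case unfolding n by (simp add: power_add algebra_simps)
    qed
  qed measurable
  also have "\<dots> = (\<integral>\<xi>. orbit k \<xi> * cnj 1 \<partial>\<mu>)"
    by (simp add: integral_power_\<nu>)
  also have "\<dots> = (\<integral>\<xi>. (U ^^ m) (orbit k) \<xi> * cnj ((U ^^ m) (\<lambda>_. 1) \<xi>) \<partial>\<mu>)"
    by (rule integral_U_pow_mult_cnj_U_pow[OF square_integrable_orbit square_integrable_const, symmetric])
  also have "\<dots> = (\<integral>\<xi>. orbit n \<xi> * cnj (orbit m \<xi>) \<partial>\<mu>)"
    unfolding n orbit_def by (simp add: funpow_add)
  finally show ?thesis .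
qed

lemma integral_power_mult_cnj_power:
  "(\<integral>z. z ^ n * cnj (z ^ m) \<partial>\<nu>) = (\<integral>\<xi>. orbit n \<xi> * cnj (orbit m \<xi>) \<partial>\<mu>)"
proof (cases "m \<le> n")
  case False
  then have "(\<integral>z. cnj (z ^ m * cnj (z ^ n)) \<partial>\<nu>) = (\<integral>\<xi>. cnj (orbit m \<xi> * cnj (orbit n \<xi>)) \<partial>\<mu>)"
    by (simp only: Bochner_Integration.integral_cnj integral_power_mult_cnj_power_le)
  then show ?thesis by (simp add: mult.commute)
qed (rule integral_power_mult_cnj_power_le)

lemma integral_norm_square_polynomial:
  "(\<integral>z. (cmod (\<Sum>n<N. b n * z ^ n))\<^sup>2 \<partial>\<nu>) = (\<integral>\<xi>. (cmod (\<Sum>n<N. b n * orbit n \<xi>))\<^sup>2 \<partial>\<mu>)"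
proof -
  have "integrable \<nu> (\<lambda>z. z ^ n * cnj (z ^ m))" for n m
  proof (rule \<nu>.integrable_const_bound[where B=1])
    show "AE z in \<nu>. norm (z ^ n * cnj (z ^ m)) \<le> 1"
      using AE_unit_circle_\<nu> by eventually_elim (simp add: norm_mult norm_power)
  qed measurable
  moreover have "integrable \<mu> (\<lambda>\<xi>. orbit n \<xi> * cnj (orbit m \<xi>))" for n m
    by (intro square_integrable_integrable_mult square_integrable_cnj square_integrable_orbit)
  ultimately have "complex_of_real (\<integral>z. (cmod (\<Sum>n<N. b n * z ^ n))\<^sup>2 \<partial>\<nu>) =
      complex_of_real (\<integral>\<xi>. (cmod (\<Sum>n<N. b n * orbit n \<xi>))\<^sup>2 \<partial>\<mu>)"
    by (simp add: of_real_integral_norm_square_sum integral_power_mult_cnj_power[simplified])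
  then show ?thesis by simp
qed

lemma borel_measurable_Tr:
  assumes "f \<in> borel_measurable \<mu>"
  shows "Tr \<mu> r f \<in> borel_measurable \<nu>"
proof -
  have sets_pair: "sets (\<nu> \<Otimes>\<^sub>M \<mu>) = sets (borel \<Otimes>\<^sub>M borel)"
    by (rule sets_pair_measure_cong[OF sets_\<nu> sets_\<mu>])
  have [measurable]: "f \<in> borel_measurable borel"
    using assms by (simp add: borel_measurable_\<mu>_eq)
  have "(\<lambda>(z, \<xi>). f \<xi> / (1 - complex_of_real r * cnj \<xi> * z)) \<in> borel_measurable (\<nu> \<Otimes>\<^sub>M \<mu>)"
    unfolding measurable_cong_sets[OF sets_pair refl] by measurable
  then show ?thesis
    unfolding Tr_def[abs_def] by (rule borel_measurable_lebesgue_integral)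
qed

lemma Tr_bound_below_one:
  assumes f: "square_integrable \<mu> f" and r: "0 \<le> r" "r < 1"
  shows "integrable \<nu> (\<lambda>z. (cmod (Tr \<mu> r f z))\<^sup>2)"
    and "(cmod (\<alpha> - 1))\<^sup>2 * (\<integral>z. (cmod (Tr \<mu> r f z))\<^sup>2 \<partial>\<nu>) \<le> 4 * (\<integral>\<xi>. (cmod (f \<xi>))\<^sup>2 \<partial>\<mu>)"
proof -
  have [measurable]: "f \<in> borel_measurable \<mu>" "Tr \<mu> r f \<in> borel_measurable \<nu>"
    using f by (simp_all add: square_integrable_def borel_measurable_Tr)
  define b where "b n = complex_of_real (r ^ n) * fourier_coeff f n" for n
  define A where "A = (\<integral>\<xi>. cmod (f \<xi>) \<partial>\<mu>)"
  define S where "S N z = (cmod (\<Sum>n<N. b n * z ^ n))\<^sup>2" for N z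
  have "A \<ge> 0" by (simp add: A_def)
  have S_measurable: "S N \<in> borel_measurable \<nu>" for N
    unfolding S_def by measurable
  have S_bound: "AE z in \<nu>. norm (S N z) \<le> (A / (1 - r))\<^sup>2" for N
    using AE_unit_circle_\<nu>
  proof eventually_elim
    case (elim z)
    have "cmod (\<Sum>n<N. b n * z ^ n) \<le> (\<Sum>n<N. r ^ n * A)"
      using norm_fourier_coeff_le[OF \<open>f \<in> borel_measurable \<mu>\<close>] elim r
      by (intro order.trans[OF norm_sum sum_mono])
        (simp add: b_def A_def norm_mult norm_power mult_left_mono)
    also have "\<dots> = (1 - r ^ N) * A / (1 - r)"
      using r by (simp add: sum_gp_strict flip: sum_distrib_right)
    also have "\<dots> \<le> A / (1 - r)"
      using r \<open>A \<ge> 0\<close> by (intro divide_right_mono mult_left_le_one_le) (simp_all add: power_le_one)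
    finally show ?case
      unfolding S_def by (simp add: power_mono)
  qed
  have S_lim: "AE z in \<nu>. (\<lambda>N. S N z) \<longlonglongrightarrow> (cmod (Tr \<mu> r f z))\<^sup>2"
    using AE_unit_circle_\<nu>
    unfolding S_def b_def
    by eventually_elim (intro tendsto_power tendsto_norm Tr_sums[OF f r, unfolded sums_def])
  show "integrable \<nu> (\<lambda>z. (cmod (Tr \<mu> r f z))\<^sup>2)"
    by (rule integrable_dominated_convergence[OF _ S_measurable _ S_lim S_bound]) simp_all
  have "(\<lambda>N. (cmod (\<alpha> - 1))\<^sup>2 * (\<integral>z. S N z \<partial>\<nu>))
      \<longlonglongrightarrow> (cmod (\<alpha> - 1))\<^sup>2 * (\<integral>z. (cmod (Tr \<mu> r f z))\<^sup>2 \<partial>\<nu>)"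
    by (intro tendsto_mult_left integral_dominated_convergence[OF _ S_measurable _ S_lim S_bound])
      simp_all
  moreover have "decseq (\<lambda>n. r ^ n)"
    using r by (intro decseq_SucI) (simp add: mult_left_le_one_le)
  then have "(cmod (\<alpha> - 1))\<^sup>2 * (\<integral>z. S N z \<partial>\<nu>) \<le> 4 * (\<integral>\<xi>. (cmod (f \<xi>))\<^sup>2 \<partial>\<mu>)" for N
    unfolding S_def integral_norm_square_polynomial
    using integral_norm_square_sum_orbit_le[OF f, of "\<lambda>n. r ^ n" N] r
    by (simp add: b_def ac_simps)
  ultimately show "(cmod (\<alpha> - 1))\<^sup>2 * (\<integral>z. (cmod (Tr \<mu> r f z))\<^sup>2 \<partial>\<nu>) \<le> 4 * (\<integral>\<xi>. (cmod (f \<xi>))\<^sup>2 \<partial>\<mu>)"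
    by (intro LIMSEQ_le_const2) auto
qed

lemma Tr_bound_above_one:
  assumes f: "square_integrable \<mu> f" and r: "1 < r"
  shows "integrable \<nu> (\<lambda>z. (cmod (Tr \<mu> r f z))\<^sup>2)"
    and "(cmod (\<alpha> - 1))\<^sup>2 * (\<integral>z. (cmod (Tr \<mu> r f z))\<^sup>2 \<partial>\<nu>) \<le> 4 * (\<integral>\<xi>. (cmod (f \<xi>))\<^sup>2 \<partial>\<mu>)"
proof -
  define h where "h = (\<lambda>\<xi>. cnj (f \<xi> * \<xi>))"
  have [measurable]: "f \<in> borel_measurable \<mu>"
    using f by (simp add: square_integrable_def)
  have h: "square_integrable \<mu> h"
    unfolding h_def using square_integrable_cnj[OF square_integrable_mult_id[OF f]]
    by (simp add: mult.commute)
  have [measurable]: "Tr \<mu> r f \<in> borel_measurable \<nu>" "Tr \<mu> (1 / r) h \<in> borel_measurable \<nu>"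
    using h by (simp_all add: borel_measurable_Tr square_integrable_def)
  have "(\<integral>\<xi>. (cmod (h \<xi>))\<^sup>2 \<partial>\<mu>) = (\<integral>\<xi>. (cmod (\<xi> * f \<xi>))\<^sup>2 \<partial>\<mu>)"
    by (simp add: h_def norm_mult mult.commute)
  also have "\<dots> = (\<integral>\<xi>. (cmod (f \<xi>))\<^sup>2 \<partial>\<mu>)"
    by (rule square_integrable_unimodular_mult(2)[OF f borel_measurable_id_\<mu> AE_unit_circle])
  finally have norm_h: "(\<integral>\<xi>. (cmod (h \<xi>))\<^sup>2 \<partial>\<mu>) = (\<integral>\<xi>. (cmod (f \<xi>))\<^sup>2 \<partial>\<mu>)" .
  have r': "0 \<le> 1 / r" "1 / r < 1"
    using r by simp_all
  have reflect: "Tr \<mu> r f z = - cnj z / complex_of_real r * cnj (Tr \<mu> (1 / r) h z)" if "cmod z = 1" for z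
    unfolding h_def by (rule Tr_reflect[OF _ r that]) measurable
  have AE_reflect: "AE z in \<nu>. (cmod (Tr \<mu> r f z))\<^sup>2 = (1 / r)\<^sup>2 * (cmod (Tr \<mu> (1 / r) h z))\<^sup>2"
    using AE_unit_circle_\<nu>
    by eventually_elim (use r in \<open>simp add: reflect norm_mult norm_divide power_mult_distrib power_divide\<close>)
  have "integrable \<nu> (\<lambda>z. (1 / r)\<^sup>2 * (cmod (Tr \<mu> (1 / r) h z))\<^sup>2)"
    using Tr_bound_below_one(1)[OF h r'] by simp
  then show "integrable \<nu> (\<lambda>z. (cmod (Tr \<mu> r f z))\<^sup>2)"
    by (subst integrable_cong_AE[OF _ _ AE_reflect]) measurable
  have "(\<integral>z. (cmod (Tr \<mu> r f z))\<^sup>2 \<partial>\<nu>) = (\<integral>z. (1 / r)\<^sup>2 * (cmod (Tr \<mu> (1 / r) h z))\<^sup>2 \<partial>\<nu>)"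
    by (rule integral_cong_AE[OF _ _ AE_reflect]) measurable
  also have "\<dots> = (1 / r)\<^sup>2 * (\<integral>z. (cmod (Tr \<mu> (1 / r) h z))\<^sup>2 \<partial>\<nu>)"
    by (rule integral_mult_right_zero)
  also have "\<dots> \<le> (\<integral>z. (cmod (Tr \<mu> (1 / r) h z))\<^sup>2 \<partial>\<nu>)"
    using r by (intro mult_left_le_one_le) (simp_all add: power_le_one)
  finally have "(cmod (\<alpha> - 1))\<^sup>2 * (\<integral>z. (cmod (Tr \<mu> r f z))\<^sup>2 \<partial>\<nu>) \<le>
      (cmod (\<alpha> - 1))\<^sup>2 * (\<integral>z. (cmod (Tr \<mu> (1 / r) h z))\<^sup>2 \<partial>\<nu>)"
    by (rule mult_left_mono) simp
  also have "\<dots> \<le> 4 * (\<integral>\<xi>. (cmod (f \<xi>))\<^sup>2 \<partial>\<mu>)"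
    using Tr_bound_below_one(2)[OF h r'] norm_h by simp
  finally show "(cmod (\<alpha> - 1))\<^sup>2 * (\<integral>z. (cmod (Tr \<mu> r f z))\<^sup>2 \<partial>\<nu>) \<le> 4 * (\<integral>\<xi>. (cmod (f \<xi>))\<^sup>2 \<partial>\<mu>)" .
qed

lemma Tr_bound:
  assumes "square_integrable \<mu> f" "0 \<le> r" "r \<noteq> 1"
  shows "integrable \<nu> (\<lambda>z. (cmod (Tr \<mu> r f z))\<^sup>2)"
    and "(cmod (\<alpha> - 1))\<^sup>2 * (\<integral>z. (cmod (Tr \<mu> r f z))\<^sup>2 \<partial>\<nu>) \<le> 4 * (\<integral>\<xi>. (cmod (f \<xi>))\<^sup>2 \<partial>\<mu>)"
  using assms Tr_bound_below_one[of f r] Tr_bound_above_one[of f r] by (cases "r < 1"; simp)+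

end

theorem theorem2p8:
  fixes \<mu> \<nu> :: "complex measure" and \<alpha> :: complex
  assumes "prob_space \<mu>" and "sets \<mu> = sets borel" and "AE z in \<mu>. cmod z = 1"
    and "cmod \<alpha> = 1" and "\<alpha> \<noteq> 1"
    and "is_spectral_measure_alpha \<mu> \<alpha> \<nu>"
  shows "\<exists>C::real. \<forall>r::real. 0 \<le> r \<and> r \<noteq> 1 \<longrightarrow>
           (\<forall>f. f \<in> borel_measurable \<mu> \<and> integrable \<mu> (\<lambda>\<xi>. (cmod (f \<xi>))\<^sup>2) \<longrightarrow>
              Tr \<mu> r f \<in> borel_measurable \<nu> \<and>
              integrable \<nu> (\<lambda>z. (cmod (Tr \<mu> r f z))\<^sup>2) \<and>
              (\<integral>z. (cmod (Tr \<mu> r f z))\<^sup>2 \<partial>\<nu>) \<le> C\<^sup>2 * (\<integral>\<xi>. (cmod (f \<xi>))\<^sup>2 \<partial>\<mu>))"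
proof -
  interpret clark_measure \<mu> \<alpha> \<nu>
    using assms by (simp add: clark_measure_def clark_measure_axioms_def rank_one_perturbation_def
        rank_one_perturbation_axioms_def circle_measure_def circle_measure_axioms_def)
  have "0 < (cmod (\<alpha> - 1))\<^sup>2"
    using \<open>\<alpha> \<noteq> 1\<close> by simp
  show ?thesis
  proof (intro exI allI impI conjI)
    fix r :: real and f
    assume r: "0 \<le> r \<and> r \<noteq> 1"
      and "f \<in> borel_measurable \<mu> \<and> integrable \<mu> (\<lambda>\<xi>. (cmod (f \<xi>))\<^sup>2)"
    then have f: "square_integrable \<mu> f"
      by (simp add: square_integrable_def)
    show "Tr \<mu> r f \<in> borel_measurable \<nu>"
      using f by (simp add: borel_measurable_Tr square_integrable_def)
    show "integrable \<nu> (\<lambda>z. (cmod (Tr \<mu> r f z))\<^sup>2)"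
      using Tr_bound(1)[OF f] r by simp
    show "(\<integral>z. (cmod (Tr \<mu> r f z))\<^sup>2 \<partial>\<nu>) \<le> (2 / cmod (\<alpha> - 1))\<^sup>2 * (\<integral>\<xi>. (cmod (f \<xi>))\<^sup>2 \<partial>\<mu>)"
      using Tr_bound(2)[OF f] r \<open>0 < (cmod (\<alpha> - 1))\<^sup>2\<close>
      by (simp add: power_divide field_simps)
  qed
qed

end
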